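(* In the setting of the context, suppose the algorithm described there terminates after $N$ steps, i.e. $CB^{(N)}=0$. Then all entries of the returned matrix $B$ (the non-zero columns of $B^{(N)}$) are non-negative.
   Context: Multi-patch setting: $\Omega\subset\mathbb{R}^2$ is the union of closures of $K$ pairwise disjoint patches $\Omega_k=G_k((0,1)^2)$; on each patch there is a local basis $\Phi^{(k)}=(\phi_i^{(k)})_{i=1}^{n^{(k)}}$ obtained by mapping tensor-product B-splines (degree $p$, open knot vectors) via $G_k$. Any two patches sharing an edge $\Gamma_{k,\ell}=\partial\Omega_k\cap\partial\Omega_\ell$ (of positive length) have nested trace spaces; the closures of two patches intersect in the empty set, a vertex of at least one of them, or an edge of at least one of them; and any two patches meeting at a T-junction share an edge. Let $n^{(pw)}=\sum_kn^{(k)}$ and index the concatenated coefficient vector $\underline u_h=(\underline u_h^{(1)},\ldots,\underline u_h^{(K)})\in\mathbb{R}^{n^{(pw)}}$. Constraint matrix $C$: for every pair of patches $\Omega_k,\Omega_\ell$ sharing an edge $\Gamma$ with $V_h^{(k)}|_\Gamma\subseteq V_h^{(\ell)}|_\Gamma$, and every $i$ with $\phi_i^{(k)}|_\Gamma\not\equiv0$, write $\phi_i^{(k)}=\sum_jE^{(k,\ell)}_{i,j}\phi_j^{(\ell)}$ on $\Gamma$ with nonnegative coefficients with row sums $1$ (knot insertion); then $C$ has a row representing $u_i^{(k)}-\sum_jE^{(k,\ell)}_{i,j}u_j^{(\ell)}=0$. For a matrix $D$ and row $m$ define $\mathcal F_m(D)=\{n: D_{m,n}\ne0,\ D_{m,n}D_{m,j}\le0\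 \forall j\ne n\}$. Algorithm: $B^{(0)}=I$; for $\nu=1,2,\ldots$ until $CB^{(\nu)}=0$: choose $m_\nu,n_\nu$ with $n_\nu\in\mathcal F_{m_\nu}(CB^{(\nu-1)})$, set $R^{(\nu)}=I-\frac{1}{e_{m_\nu}^\top CB^{(\nu-1)}e_{n_\nu}}e_{n_\nu}e_{m_\nu}^\top CB^{(\nu-1)}$, $B^{(\nu)}=B^{(\nu-1)}R^{(\nu)}$. Return $B$ = the non-zero columns of $B^{(N)}$, $N$ the first index with $CB^{(N)}=0$. *)

theory Defs
  imports "Jordan_Normal_Form.Matrix"
begin

text \<open>Global coefficient indices are 0..<npw; patch p assigns each global index
its patch number (the concatenation of the local coefficient vectors).\<close>

text \<open>Algebraic structure of the constraint matrix C: every row represents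
  u_i - sum_j E_ij u_j = 0, where i belongs to patch k, all j belong to a
  different patch l, the weights E_ij are nonnegative and sum to 1.\<close>
definition constraint_matrix :: "nat \<Rightarrow> (nat \<Rightarrow> nat) \<Rightarrow> real mat \<Rightarrow> bool" where
  "constraint_matrix npw patch C \<longleftrightarrow>
     dim_col C = npw \<and>
     (\<forall>m < dim_row C. \<exists>i l (E :: nat \<Rightarrow> real).
        i < npw \<and> patch i \<noteq> l \<and> C $$ (m, i) = 1 \<and>
        (\<forall>j < npw. patch j = l \<longrightarrow> E j \<ge> 0) \<and>
        (\<Sum>j\<in>{j. j < npw \<and> patch j = l}. E j) = 1 \<and>
        (\<forall>j < npw. j \<noteq> i \<longrightarrow>
            C $$ (m, j) = (if patch j = l then - E j else 0)))"

definition pivot_set :: "real mat \<Rightarrow> nat \<Rightarrow> nat set" where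
  "pivot_set D m = {n. n < dim_col D \<and> D $$ (m, n) \<noteq> 0 \<and>
       (\<forall>j < dim_col D. j \<noteq> n \<longrightarrow> D $$ (m, n) * D $$ (m, j) \<le> 0)}"

definition update_mat :: "nat \<Rightarrow> real mat \<Rightarrow> nat \<Rightarrow> nat \<Rightarrow> real mat" where
  "update_mat npw D m n =
     1\<^sub>m npw - (1 / D $$ (m, n)) \<cdot>\<^sub>m
       mat npw npw (\<lambda>(i, j). if i = n then D $$ (m, j) else 0)"

primrec alg_B :: "nat \<Rightarrow> real mat \<Rightarrow> (nat \<Rightarrow> nat) \<Rightarrow> (nat \<Rightarrow> nat) \<Rightarrow> nat \<Rightarrow> real mat" where
  "alg_B npw C ms ns 0 = 1\<^sub>m npw"
| "alg_B npw C ms ns (Suc k) =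
     alg_B npw C ms ns k * update_mat npw (C * alg_B npw C ms ns k) (ms (Suc k)) (ns (Suc k))"

end

theory Submission
  imports Defs
begin

text \<open>Each update matrix R is entrywise non-negative: off the pivot row it is the identity, its
  pivot entry is 1 - 1 = 0, and every other entry of the pivot row is -D(m,j)/D(m,n) \<ge> 0 because
  the pivot n is chosen so that D(m,n) D(m,j) \<le> 0. Hence every B^(\<nu>) = R^(1) \<dots> R^(\<nu>) is
  non-negative, whether or not the algorithm has terminated.\<close>

definition nonneg_mat :: "'a :: ordered_semiring_0 mat \<Rightarrow> bool" where
  "nonneg_mat A \<longleftrightarrow> (\<forall>i < dim_row A. \<forall>j < dim_col A. 0 \<le> A $$ (i, j))"

lemma nonneg_mat_one: "nonneg_mat (1\<^sub>m n :: 'a :: linordered_semidom mat)"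
  by (simp add: nonneg_mat_def)

lemma nonneg_mat_mult:
  fixes A B :: "'a :: ordered_semiring_0 mat"
  assumes "nonneg_mat A" "nonneg_mat B" "dim_col A = dim_row B"
  shows "nonneg_mat (A * B)"
  unfolding nonneg_mat_def
proof (intro allI impI)
  fix i j assume "i < dim_row (A * B)" "j < dim_col (A * B)"
  then have "(A * B) $$ (i, j) = (\<Sum>l<dim_row B. A $$ (i, l) * B $$ (l, j))"
    using assms(3) by (simp add: scalar_prod_def atLeast0LessThan)
  also have "\<dots> \<ge> 0"
    using assms \<open>i < dim_row (A * B)\<close> \<open>j < dim_col (A * B)\<close>
    by (intro sum_nonneg mult_nonneg_nonneg) (auto simp: nonneg_mat_def)
  finally show "0 \<le> (A * B) $$ (i, j)" .
qed

lemma update_mat_carrier: "update_mat npw D m n \<in> carrier_mat npw npw"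
  unfolding update_mat_def by (intro minus_carrier_mat smult_carrier_mat one_carrier_mat mat_carrier)

lemma update_mat_nonneg:
  assumes "n \<in> pivot_set D m" "dim_col D = npw"
  shows "nonneg_mat (update_mat npw D m n)"
  unfolding nonneg_mat_def
proof (intro allI impI)
  fix i j assume ij: "i < dim_row (update_mat npw D m n)" "j < dim_col (update_mat npw D m n)"
  have pivot: "D $$ (m, n) \<noteq> 0" "j \<noteq> n \<Longrightarrow> D $$ (m, n) * D $$ (m, j) \<le> 0"
    using assms ij update_mat_carrier[of npw D m n] by (auto simp: pivot_set_def)
  have "update_mat npw D m n $$ (i, j) =
      (if i = j then 1 else 0) - (if i = n then D $$ (m, j) / D $$ (m, n) else 0)"
    using ij update_mat_carrier[of npw D m n] by (auto simp: update_mat_def)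
  then show "0 \<le> update_mat npw D m n $$ (i, j)"
    using pivot by (auto simp: divide_le_0_iff mult_le_0_iff)
qed

lemma alg_B_carrier: "alg_B npw C ms ns k \<in> carrier_mat npw npw"
  by (induction k) (auto simp: update_mat_def)

lemma alg_B_nonneg:
  assumes "\<And>\<nu>. 1 \<le> \<nu> \<Longrightarrow> \<nu> \<le> k \<Longrightarrow>
             ns \<nu> \<in> pivot_set (C * alg_B npw C ms ns (\<nu> - 1)) (ms \<nu>)"
  shows "nonneg_mat (alg_B npw C ms ns k)"
  using assms
proof (induction k)
  case 0
  show ?case by (simp add: nonneg_mat_one)
next
  case (Suc k)
  let ?B = "alg_B npw C ms ns k"
  let ?R = "update_mat npw (C * ?B) (ms (Suc k)) (ns (Suc k))"
  have dims: "dim_col ?B = npw" "dim_row ?R = npw"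
    using alg_B_carrier update_mat_carrier by (metis carrier_matD(2), metis carrier_matD(1))
  have "nonneg_mat ?R"
    using Suc.prems[of "Suc k"] dims(1) by (intro update_mat_nonneg) auto
  moreover have "nonneg_mat ?B"
    using Suc by simp
  ultimately show ?case
    using dims by (simp add: nonneg_mat_mult)
qed

theorem mainTheorem5:
  fixes npw N :: nat and patch :: "nat \<Rightarrow> nat" and C :: "real mat"
    and ms ns :: "nat \<Rightarrow> nat"
  assumes "constraint_matrix npw patch C"
    and "\<And>\<nu>. 1 \<le> \<nu> \<Longrightarrow> \<nu> \<le> N \<Longrightarrow> ms \<nu> < dim_row C"
    and "\<And>\<nu>. 1 \<le> \<nu> \<Longrightarrow> \<nu> \<le> N \<Longrightarrow>
           ns \<nu> \<in> pivot_set (C * alg_B npw C ms ns (\<nu> - 1)) (ms \<nu>)"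
    and "\<And>\<nu>. \<nu> < N \<Longrightarrow> C * alg_B npw C ms ns \<nu> \<noteq> 0\<^sub>m (dim_row C) npw"
    and "C * alg_B npw C ms ns N = 0\<^sub>m (dim_row C) npw"
  shows "\<forall>j < npw. col (alg_B npw C ms ns N) j \<noteq> 0\<^sub>v npw \<longrightarrow>
           (\<forall>i < npw. alg_B npw C ms ns N $$ (i, j) \<ge> 0)"
proof -
  have "nonneg_mat (alg_B npw C ms ns N)"
    using assms(3) by (rule alg_B_nonneg)
  then show ?thesis
    using alg_B_carrier[of npw C ms ns N] by (auto simp: nonneg_mat_def)
qed

end
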